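(* Let $n=p_1^{r_1}p_2^{r_2}\cdots p_k^{r_k}$, where $k\ge1$, $p_1,\ldots,p_k$ are distinct primes and $r_1\ge r_2\ge\cdots\ge r_k\ge1$. If $n$ is not prime, then $$F(G(n))=\sum_{\substack{i_1<i_2<\cdots<i_s\\ \emptyset\ne\{i_1,\ldots,i_s\}\subseteq\{1,\ldots,k\}}} r_{i_1}r_{i_2}\cdots r_{i_s}\,x_{i_1}x_{i_2}\cdots x_{i_s}.$$ If $n$ is prime, then $F(G(n))=1$.
   Context: For an integer $n\ge2$, $G(n)$ is the simple undirected graph whose vertex set is the set of divisors of $n$ greater than $1$, two distinct vertices $a,b$ adjacent iff $\gcd(a,b)>1$. A clique is a set of pairwise adjacent vertices; a set $S$ of cliques of $G$ is a total clique covering if every vertex lies in some member of $S$ and every edge has both endpoints in some member of $S$; $\theta_t(G)$ is the minimum size of a total clique covering. The code $\sigma(G)$ of a graph $G$ with $m$ vertices and $s\ge0$ isolated vertices: let $k'=\theta_t(G)-s$; for each total clique covering $S=\{C_1,\ldots,C_{s+k'}\}$ with $|S|=\theta_t(G)$ (where $C_1,\ldots,C_s$ are the singletons of the isolated vertices) and each bijective assignment of the first $k'$ primes to $C_{s+1},\ldots,C_{s+k'}$, label each isolated vertex by $1$ and each other vertex $v$ by the product of primes assigned to the cliques among $C_{s+1},\ldots,C_{s+k'}$ containing $v$, and list the labels in non-decreasing order; $\sigma[S]$ is the lexicographically least sequence so obtained from $S$, and $\sigma(G)$ is the lexicographically least among all $\sigma[S]$ with $|S|=\theta_t(G)$. The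 normal polynomial representation $F(G)\in\mathbb{Z}_{\ge0}[x_1,x_2,\ldots]$ is $\sum_{\lambda} m(\lambda)$, summed over the entries $\lambda$ of $\sigma(G)$ (with multiplicity), where $m(1)=1$ and $m(q_{j_1}q_{j_2}\cdots q_{j_r})=x_{j_1}x_{j_2}\cdots x_{j_r}$ for distinct indices $j_1,\ldots,j_r$, $q_j$ denoting the $j$-th prime. *)

theory Defs
  imports Main "HOL-Computational_Algebra.Primes" "HOL-Library.Multiset"
    "HOL-Library.List_Lexorder" "HOL-Library.Infinite_Set"
begin

definition is_clique :: "'a set \<Rightarrow> ('a \<Rightarrow> 'a \<Rightarrow> bool) \<Rightarrow> 'a set \<Rightarrow> bool" where
  "is_clique V E C \<longleftrightarrow> C \<subseteq> V \<and> (\<forall>a\<in>C. \<forall>b\<in>C. a \<noteq> b \<longrightarrow> E a b)"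

definition total_clique_covering :: "'a set \<Rightarrow> ('a \<Rightarrow> 'a \<Rightarrow> bool) \<Rightarrow> 'a set set \<Rightarrow> bool" where
  "total_clique_covering V E S \<longleftrightarrow>
     (\<forall>C\<in>S. is_clique V E C) \<and>
     (\<forall>v\<in>V. \<exists>C\<in>S. v \<in> C) \<and>
     (\<forall>a\<in>V. \<forall>b\<in>V. a \<noteq> b \<and> E a b \<longrightarrow> (\<exists>C\<in>S. a \<in> C \<and> b \<in> C))"

definition theta_t :: "'a set \<Rightarrow> ('a \<Rightarrow> 'a \<Rightarrow> bool) \<Rightarrow> nat" where
  "theta_t V E = (LEAST m. \<exists>S. finite S \<and> total_clique_covering V E S \<and> card S = m)"

definition isolated_vertices :: "'a set \<Rightarrow> ('a \<Rightarrow> 'a \<Rightarrow> bool) \<Rightarrow> 'a set" where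
  "isolated_vertices V E = {v \<in> V. \<forall>u\<in>V. u \<noteq> v \<longrightarrow> \<not> E v u}"

text \<open>The j-th prime, 1-indexed: qprime 1 = 2, qprime 2 = 3, ...\<close>
definition qprime :: "nat \<Rightarrow> nat" where
  "qprime j = enumerate {p::nat. prime p} (j - 1)"

definition nonisolated_cliques :: "'a set \<Rightarrow> ('a \<Rightarrow> 'a \<Rightarrow> bool) \<Rightarrow> 'a set set \<Rightarrow> 'a set set" where
  "nonisolated_cliques V E S = S - (\<lambda>v. {v}) ` isolated_vertices V E"

definition vertex_label :: "'a set \<Rightarrow> ('a \<Rightarrow> 'a \<Rightarrow> bool) \<Rightarrow> 'a set set \<Rightarrow> ('a set \<Rightarrow> nat) \<Rightarrow> 'a \<Rightarrow> nat" where
  "vertex_label V E S f v =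
     (if v \<in> isolated_vertices V E then 1
      else (\<Prod>C\<in>{C \<in> nonisolated_cliques V E S. v \<in> C}. qprime (f C)))"

definition label_seq :: "'a set \<Rightarrow> ('a \<Rightarrow> 'a \<Rightarrow> bool) \<Rightarrow> 'a set set \<Rightarrow> ('a set \<Rightarrow> nat) \<Rightarrow> nat list" where
  "label_seq V E S f = sorted_list_of_multiset (image_mset (vertex_label V E S f) (mset_set V))"

text \<open>sigma[S]: lexicographically least sequence over all bijective prime assignments.\<close>
definition sigma_S :: "'a set \<Rightarrow> ('a \<Rightarrow> 'a \<Rightarrow> bool) \<Rightarrow> 'a set set \<Rightarrow> nat list" where
  "sigma_S V E S = Min {label_seq V E S f | f.
      bij_betw f (nonisolated_cliques V E S) {1..theta_t V E - card (isolated_vertices V E)}}"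

definition sigma_code :: "'a set \<Rightarrow> ('a \<Rightarrow> 'a \<Rightarrow> bool) \<Rightarrow> nat list" where
  "sigma_code V E = Min {sigma_S V E S | S.
      finite S \<and> total_clique_covering V E S \<and> card S = theta_t V E}"

text \<open>Every monomial m(lambda) is squarefree, x_{j1}...x_{jr}
  with distinct indices, so it is represented by its index set {j1,...,jr} (the monomial 1 is {}),
  and the polynomial (a sum of such monomials with nonnegative coefficients) by the multiset of
  monomials.\<close>
definition monomial_of :: "nat \<Rightarrow> nat set" where
  "monomial_of lam = {j. j \<ge> 1 \<and> qprime j dvd lam}"

definition normal_poly_rep :: "'a set \<Rightarrow> ('a \<Rightarrow> 'a \<Rightarrow> bool) \<Rightarrow> nat set multiset" where
  "normal_poly_rep V E = image_mset monomial_of (mset (sigma_code V E))"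

definition divgraph_V :: "nat \<Rightarrow> nat set" where
  "divgraph_V n = {d. d dvd n \<and> d > 1}"

definition divgraph_E :: "nat \<Rightarrow> nat \<Rightarrow> bool" where
  "divgraph_E a b \<longleftrightarrow> gcd a b > 1"

definition F_G :: "nat \<Rightarrow> nat set multiset" where
  "F_G n = normal_poly_rep (divgraph_V n) divgraph_E"

end

theory Submission
  imports Defs "HOL-Library.FuncSet" "HOL-Combinatorics.Transposition"
begin

(* The cliques D_i of divisors divisible by p_i form the only minimum total clique covering:
   the primes p_i are pairwise non-adjacent, so each needs a clique of its own, and the clique
   containing p_i must consist of exactly the multiples of p_i.  Assigning the prime q_(h i) to
   D_i labels a divisor d by the product of the q_(h i) over its support {i. p_i | d}, and there
   are r_(i_1) ... r_(i_s) divisors with support {i_1, ..., i_s}.  In the lexicographically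
   least code the larger exponents get the smaller primes, since otherwise transposing two
   primes lowers the first label where the two codes differ; hence h preserves r, and F(G(n))
   is the multiset of supports itself.  For prime n the graph is a single isolated vertex. *)

lemma qprime_prime: "prime (qprime j)"
  unfolding qprime_def using enumerate_in_set[OF primes_infinite] by simp

lemma qprime_less: "0 < i \<Longrightarrow> i < j \<Longrightarrow> qprime i < qprime j"
  unfolding qprime_def by (simp add: enumerate_mono primes_infinite)

definition qprod :: "nat set \<Rightarrow> nat" where
  "qprod A = (\<Prod>a\<in>A. qprime a)"

lemma qprime_le_qprod: "finite A \<Longrightarrow> j \<in> A \<Longrightarrow> qprime j \<le> qprod A"
  unfolding qprod_def
  by (intro dvd_imp_le dvd_prodI) (auto simp: prime_gt_0_nat qprime_prime prod_pos)

lemma monomial_of_qprod: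
  assumes "finite A" "0 \<notin> A"
  shows "monomial_of (qprod A) = A"
proof -
  have "qprime j dvd qprod A \<longleftrightarrow> j \<in> A" if "1 \<le> j" for j
  proof
    assume "qprime j dvd qprod A"
    then obtain a where "a \<in> A" "qprime j dvd qprime a"
      unfolding qprod_def using prime_dvd_prod_iff[OF assms(1) qprime_prime] by blast
    then have "qprime j = qprime a"
      using primes_dvd_imp_eq qprime_prime by blast
    moreover have "0 < a"
      using \<open>a \<in> A\<close> assms(2) by (cases a) auto
    ultimately have "j = a"
      using qprime_less[of j a] qprime_less[of a j] that by (cases j a rule: linorder_cases) auto
    with \<open>a \<in> A\<close> show "j \<in> A"
      by simp
  qed (use assms(1) in \<open>simp add: qprod_def dvd_prodI\<close>)
  moreover have "0 < j" if "j \<in> A" for j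
    using assms(2) that by (cases j) auto
  ultimately show ?thesis
    unfolding monomial_of_def by (auto simp: Suc_le_eq)
qed

lemma inj_on_qprod: "inj_on qprod {A. finite A \<and> 0 \<notin> A}"
  by (rule inj_on_inverseI[of _ monomial_of]) (simp add: monomial_of_qprod)

lemma count_image_mset_inj_on:
  assumes "inj_on f (insert x (set_mset M))"
  shows "count (image_mset f M) (f x) = count M x"
proof -
  have "f -` {f x} \<inter> set_mset M \<subseteq> {x}"
    using assms by (auto simp: inj_on_def)
  then have "f -` {f x} \<inter> set_mset M = (if x \<in># M then {x} else {})"
    by auto
  then show ?thesis
    by (simp add: count_image_mset not_in_iff)
qed

lemma count_image_mset_mset_set:
  "finite A \<Longrightarrow> count (image_mset f (mset_set A)) x = card {a \<in> A. f a = x}"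
  by (simp add: count_image_mset Int_commute vimage_def Collect_conj_eq)

lemma sorted_less_if_count_less:
  fixes xs ys :: "'a::linorder list"
  assumes "sorted xs" "sorted ys" "length xs = length ys"
    and "\<And>u. u < v \<Longrightarrow> count (mset xs) u = count (mset ys) u"
    and "count (mset ys) v < count (mset xs) v"
  shows "xs < ys"
  using assms
proof (induction xs arbitrary: ys)
  case Nil
  then show ?case by simp
next
  case (Cons x xs)
  then obtain y ys' where ys: "ys = y # ys'"
    by (cases ys) auto
  have "v \<in> set (x # xs)"
    using Cons.prems(5) count_mset_0_iff[of "x # xs" v] by auto
  then have "x \<le> v"
    using Cons.prems(1) by auto
  consider "x < y" | "y < x" | "x = y"
    by fastforce
  then show ?case
  proof cases
    case 1
    then show ?thesis using ys by simp
  next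
    case 2
    \<comment> \<open>then y occurs in ys but not in x # xs, so y must be at least v\<close>
    have "count (mset (x # xs)) y = 0"
      using 2 Cons.prems(1) by (auto simp: count_mset_0_iff)
    moreover have "0 < count (mset ys) y"
      using ys by simp
    ultimately have "\<not> y < v"
      using Cons.prems(4)[of y] by auto
    then show ?thesis
      using 2 \<open>x \<le> v\<close> by simp
  next
    case 3
    have "xs < ys'"
    proof (rule Cons.IH)
      show "sorted xs" "sorted ys'" "length xs = length ys'"
        using Cons.prems ys by auto
      show "count (mset xs) u = count (mset ys') u" if "u < v" for u
        using Cons.prems(4)[OF that] ys 3 by (auto split: if_splits)
      show "count (mset ys') v < count (mset xs) v"
        using Cons.prems(5) ys 3 by (auto split: if_splits)
    qed
    then show ?thesis using ys 3 by simp
  qed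
qed

lemma sorted_qprod_transpose_less:
  fixes M :: "nat set multiset"
  assumes M: "\<And>A. A \<in># M \<Longrightarrow> finite A \<and> 0 \<notin> A"
    and jl: "0 < j" "j < l"
    and count_less: "count M {j} < count M {l}"
  shows "sorted_list_of_multiset (image_mset (qprod \<circ> image (transpose j l)) M)
       < sorted_list_of_multiset (image_mset qprod M)"
proof -
  let ?\<sigma> = "transpose j l"
  let ?M' = "image_mset (image ?\<sigma>) M"
  have M': "finite A \<and> 0 \<notin> A" if "A \<in># ?M'" for A
    using that M jl by (auto simp: transpose_def)
  have small: "j \<notin> B \<and> l \<notin> B" if "finite B" "qprod B < qprime j" for B
    using qprime_le_qprod[OF that(1), of j] qprime_le_qprod[OF that(1), of l] qprime_less[OF jl] that(2)
    by auto
  \<comment> \<open>labels below qprime j avoid both swapped indices, so they are untouched\<close>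
  have fixed: "?\<sigma> ` A = A" if "finite A" "qprod A < qprime j \<or> qprod (?\<sigma> ` A) < qprime j" for A
  proof -
    have "j \<notin> A \<and> l \<notin> A"
      using that small[of A] small[of "?\<sigma> ` A"] image_eqI[of j ?\<sigma> l A] image_eqI[of l ?\<sigma> j A]
      by auto
    then show ?thesis
      by simp
  qed
  have below: "count (image_mset qprod ?M') u = count (image_mset qprod M) u" if "u < qprime j" for u
  proof -
    have "u = qprod (?\<sigma> ` A) \<longleftrightarrow> u = qprod A" if "A \<in># M" for A
      using fixed[of A] M[OF that] \<open>u < qprime j\<close> by auto
    then have "{A. A \<in># M \<and> u = qprod (?\<sigma> ` A)} = {A. A \<in># M \<and> u = qprod A}"
      by blast
    then show ?thesis
      by (simp add: count_image_mset' image_mset.compositionality)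
  qed
  have count_qprime: "count (image_mset qprod N) (qprime j) = count N {j}"
    if "\<And>A. A \<in># N \<Longrightarrow> finite A \<and> 0 \<notin> A" for N
  proof -
    have "inj_on qprod (insert {j} (set_mset N))"
      using jl that by (intro inj_on_subset[OF inj_on_qprod]) auto
    from count_image_mset_inj_on[OF this] show ?thesis
      by (simp add: qprod_def)
  qed
  have "count (image_mset qprod M) (qprime j) = count M {j}"
    using M by (rule count_qprime)
  also have "\<dots> < count M {l}" by (fact count_less)
  also have "\<dots> = count ?M' {j}"
    using count_image_mset_inj_on[OF inj_on_image[OF inj_on_transpose[of j l]], where x = "{l}" and M = M]
    by simp
  also have "\<dots> = count (image_mset qprod ?M') (qprime j)"
    using M' by (rule count_qprime[symmetric])
  finally have "count (image_mset qprod M) (qprime j) < count (image_mset qprod ?M') (qprime j)" .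
  then show ?thesis
    using below by (intro sorted_less_if_count_less[where v = "qprime j"])
      (simp_all add: image_mset.compositionality flip: size_mset)
qed

lemma down_closed_eq_if_card_eq:
  fixes X Y :: "'a::linorder set"
  assumes "finite X" "finite Y" "card X = card Y"
    and X: "\<And>x y. x \<in> X \<Longrightarrow> y \<in> A \<Longrightarrow> y \<le> x \<Longrightarrow> y \<in> X" "X \<subseteq> A"
    and Y: "\<And>x y. x \<in> Y \<Longrightarrow> y \<in> A \<Longrightarrow> y \<le> x \<Longrightarrow> y \<in> Y" "Y \<subseteq> A"
  shows "X = Y"
proof -
  have "X \<subseteq> Y \<or> Y \<subseteq> X"
  proof (rule ccontr)
    assume "\<not> (X \<subseteq> Y \<or> Y \<subseteq> X)"
    then obtain x y where xy: "x \<in> X" "x \<notin> Y" "y \<in> Y" "y \<notin> X"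
      by blast
    then have "x \<in> A" "y \<in> A"
      using X(2) Y(2) by blast+
    then show False
      using xy X(1)[of x y] Y(1)[of y x] by (cases "x \<le> y") simp_all
  qed
  then show ?thesis
    using assms(1-3) card_subset_eq[of Y X] card_subset_eq[of X Y] by auto
qed

lemma antimono_permutation_eq:
  fixes h :: "'a::linorder \<Rightarrow> 'a" and r :: "'a \<Rightarrow> 'b::linorder"
  assumes A: "finite A" and h: "bij_betw h A A" and r: "antimono_on A r"
    and hr: "\<And>a b. a \<in> A \<Longrightarrow> b \<in> A \<Longrightarrow> h a < h b \<Longrightarrow> r b \<le> r a"
    and a: "a \<in> A"
  shows "r (h a) = r a"
proof -
  define T where "T t = {x \<in> A. t \<le> r x}" for t
  have inj: "inj_on h A" and surj: "h ` A = A"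
    using h by (simp_all add: bij_betw_def)
  \<comment> \<open>both T t and its image under h are initial segments of A of the same size\<close>
  have hT: "h ` T t = T t" for t
  proof (rule down_closed_eq_if_card_eq[where A = A])
    show "finite (h ` T t)" "finite (T t)"
      using A by (simp_all add: T_def)
    show "card (h ` T t) = card (T t)"
      using inj by (rule card_image[OF inj_on_subset]) (auto simp: T_def)
    show "h ` T t \<subseteq> A" "T t \<subseteq> A"
      using surj by (auto simp: T_def)
    show "y \<in> T t" if "x \<in> T t" "y \<in> A" "y \<le> x" for x y
      using that monotone_onD[OF r, of y x] by (auto simp: T_def)
    show "y \<in> h ` T t" if "x \<in> h ` T t" "y \<in> A" "y \<le> x" for x y
    proof -
      obtain b where b: "b \<in> A" "y = h b"
        using surj \<open>y \<in> A\<close> by blast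
      obtain c where c: "c \<in> T t" "x = h c"
        using \<open>x \<in> h ` T t\<close> by blast
      have "c \<in> A" "t \<le> r c"
        using c(1) by (simp_all add: T_def)
      have "r c \<le> r b"
      proof (cases "h b = h c")
        case True
        then show ?thesis
          using inj b(1) \<open>c \<in> A\<close> by (simp add: inj_on_eq_iff)
      next
        case False
        then show ?thesis
          using hr[OF b(1) \<open>c \<in> A\<close>] b c \<open>y \<le> x\<close> by simp
      qed
      then show ?thesis
        using b \<open>t \<le> r c\<close> by (auto simp: T_def)
    qed
  qed
  have T_A: "T t \<subseteq> A" for t
    by (auto simp: T_def)
  have "h a \<in> h ` T (r a)"
    using a by (simp add: T_def)
  then have "r a \<le> r (h a)"
    unfolding hT by (simp add: T_def)
  moreover have "h a \<in> T (r (h a))"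
    using a surj by (auto simp: T_def)
  then have "h a \<in> h ` T (r (h a))"
    by (simp add: hT)
  then have "a \<in> T (r (h a))"
    using inj a T_A by (simp add: inj_on_image_mem_iff)
  then have "r (h a) \<le> r a"
    by (simp add: T_def)
  ultimately show ?thesis
    by simp
qed

lemma unique_minimum_covering:
  assumes S0: "finite S0" "total_clique_covering V E S0"
    and minimal: "\<And>S. finite S \<Longrightarrow> total_clique_covering V E S \<Longrightarrow> card S0 \<le> card S"
    and unique: "\<And>S. finite S \<Longrightarrow> total_clique_covering V E S \<Longrightarrow> card S = card S0 \<Longrightarrow> S = S0"
  shows "theta_t V E = card S0" "sigma_code V E = sigma_S V E S0"
proof -
  show theta: "theta_t V E = card S0"
    unfolding theta_t_def using S0 minimal by (intro Least_equality) auto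
  have "{sigma_S V E S | S. finite S \<and> total_clique_covering V E S \<and> card S = theta_t V E}
      = {sigma_S V E S0}"
    using S0 unique unfolding theta by blast
  then show "sigma_code V E = sigma_S V E S0"
    by (simp add: sigma_code_def)
qed

lemma sigma_code_singleton: "sigma_code {v} E = [1]"
proof -
  have cover: "total_clique_covering {v} E {{v}}"
    by (simp add: total_clique_covering_def is_clique_def)
  have minimal: "1 \<le> card S" if "finite S" "total_clique_covering {v} E S" for S
  proof -
    have "S \<noteq> {}"
      using that(2) by (auto simp: total_clique_covering_def)
    then show ?thesis
      using that(1) by (simp add: Suc_le_eq card_gt_0_iff)
  qed
  have unique: "S = {{v}}" if S: "total_clique_covering {v} E S" "card S = 1" for S
  proof -
    obtain C where "S = {C}"
      using S(2) card_1_singletonE by blast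
    then show ?thesis
      using S(1) by (auto simp: total_clique_covering_def is_clique_def)
  qed
  have isolated: "isolated_vertices {v} E = {v}"
    by (auto simp: isolated_vertices_def)
  have theta: "theta_t {v} E = 1"
    using unique_minimum_covering(1)[OF _ cover] minimal unique by simp
  have labels: "label_seq {v} E {{v}} f = [1]" for f
    by (simp add: label_seq_def vertex_label_def isolated)
  have "{label_seq {v} E {{v}} f | f. bij_betw f (nonisolated_cliques {v} E {{v}})
      {1..theta_t {v} E - card (isolated_vertices {v} E)}} = {[1]}"
    unfolding labels by (simp add: nonisolated_cliques_def isolated theta bij_betw_def)
  then have "sigma_S {v} E {{v}} = [1]"
    by (simp add: sigma_S_def)
  moreover have "sigma_code {v} E = sigma_S {v} E {{v}}"
    using unique_minimum_covering(2)[OF _ cover] minimal unique by simp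
  ultimately show ?thesis
    by simp
qed

lemma prime_gcd_gt_1_iff: "prime (q::nat) \<Longrightarrow> 1 < gcd q d \<longleftrightarrow> q dvd d"
  using prime_gt_1_nat[of q] prime_imp_coprime[of q d]
  by (cases "q dvd d") (auto simp: gcd_nat.absorb1 coprime_iff_gcd_eq_1)

locale prime_power_product =
  fixes n k :: nat and p r :: "nat \<Rightarrow> nat"
  assumes primes: "\<forall>i\<in>{1..k}. prime (p i)"
    and inj_p: "inj_on p {1..k}"
    and exponents_pos: "\<forall>i\<in>{1..k}. 1 \<le> r i"
    and n_eq: "n = (\<Prod>i=1..k. p i ^ r i)"
begin

abbreviation I :: "nat set" where "I \<equiv> {1..k}"
abbreviation V :: "nat set" where "V \<equiv> divgraph_V n"

definition supp :: "nat \<Rightarrow> nat set" where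
  "supp d = {i \<in> I. p i dvd d}"

lemma n_pos: "0 < n"
  unfolding n_eq using primes by (simp add: prime_gt_0_nat prod_pos)

lemma p_prime: "i \<in> I \<Longrightarrow> prime (p i)"
  using primes by blast

lemma finite_V: "finite V"
  by (rule finite_subset[of _ "{..n}"]) (auto simp: divgraph_V_def dvd_imp_le n_pos)

lemma V_pos: "d \<in> V \<Longrightarrow> 0 < d"
  by (simp add: divgraph_V_def)

lemma prime_dvd_n: "prime q \<Longrightarrow> q dvd n \<Longrightarrow> \<exists>i\<in>I. q = p i"
proof -
  assume q: "prime q" "q dvd n"
  then obtain i where i: "i \<in> I" "q dvd p i ^ r i"
    unfolding n_eq by (auto simp: prime_dvd_prod_iff)
  then have "q dvd p i"
    using q(1) prime_dvd_power by blast
  then show ?thesis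
    using i(1) q(1) primes primes_dvd_imp_eq by blast
qed

lemma p_dvd_n: "i \<in> I \<Longrightarrow> p i dvd n"
proof -
  assume i: "i \<in> I"
  have "0 < r i"
    using exponents_pos i by (simp add: Suc_le_eq)
  then have "p i dvd p i ^ r i"
    by (simp add: dvd_power)
  also have "\<dots> dvd n"
    unfolding n_eq using i by (intro dvd_prodI) auto
  finally show ?thesis .
qed

lemma p_in_V: "i \<in> I \<Longrightarrow> p i \<in> V"
  using p_dvd_n[of i] prime_gt_1_nat[of "p i"] primes by (simp add: divgraph_V_def)

lemma p_dvd_p_iff:
  assumes "i \<in> I" "j \<in> I"
  shows "p i dvd p j \<longleftrightarrow> i = j"
proof
  assume "p i dvd p j"
  then have "p i = p j"
    using primes assms by (simp add: primes_dvd_imp_eq)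
  then show "i = j"
    using inj_p assms by (simp add: inj_on_eq_iff)
qed simp

lemma supp_subset: "supp d \<subseteq> I"
  by (auto simp: supp_def)

lemma supp_nonempty: "d \<in> V \<Longrightarrow> supp d \<noteq> {}"
proof -
  assume d: "d \<in> V"
  then obtain q where "prime q" "q dvd d"
    using prime_factor_nat[of d] by (auto simp: divgraph_V_def)
  moreover have "d dvd n"
    using d by (simp add: divgraph_V_def)
  ultimately obtain i where "i \<in> I" "q = p i"
    using prime_dvd_n[of q] dvd_trans by blast
  with \<open>q dvd d\<close> show ?thesis
    by (auto simp: supp_def)
qed

lemma multiplicity_prime_power_prod:
  assumes "J \<subseteq> I" "i \<in> I"
  shows "multiplicity (p i) (\<Prod>j\<in>J. p j ^ e j) = (if i \<in> J then e i else 0)"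
proof -
  have J: "finite J" "\<forall>j\<in>J. prime (p j)"
    using assms(1) primes finite_subset by auto
  have "multiplicity (p i) (\<Prod>j\<in>J. p j ^ e j) = (\<Sum>j\<in>J. multiplicity (p i) (p j ^ e j))"
    using J primes assms(2)
    by (intro prime_elem_multiplicity_prod_distrib) (auto simp: prime_gt_0_nat)
  also have "\<dots> = (\<Sum>j\<in>J. if j = i then e i else 0)"
  proof (rule sum.cong)
    fix j assume "j \<in> J"
    then have "j \<in> I"
      using assms(1) by blast
    show "multiplicity (p i) (p j ^ e j) = (if j = i then e i else 0)"
    proof (cases "j = i")
      case False
      then have "p i \<noteq> p j"
        using inj_on_eq_iff[OF inj_p assms(2) \<open>j \<in> I\<close>] by simp
      then show ?thesis
        using False primes assms(2) \<open>j \<in> I\<close> by (simp add: multiplicity_distinct_prime_power)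
    qed (use primes assms(2) in \<open>simp add: prime_imp_prime_elem\<close>)
  qed simp
  also have "\<dots> = (if i \<in> J then e i else 0)"
    using J(1) by simp
  finally show ?thesis .
qed

lemma multiplicity_n: "i \<in> I \<Longrightarrow> multiplicity (p i) n = r i"
  unfolding n_eq using multiplicity_prime_power_prod[of I i r] by simp

lemma divisor_factorization:
  assumes "d \<in> V"
  shows "d = (\<Prod>i\<in>supp d. p i ^ multiplicity (p i) d)"
proof -
  have "q \<in> prime_factors d \<longleftrightarrow> q \<in> p ` supp d" for q
  proof
    assume "q \<in> prime_factors d"
    then have "prime q" "q dvd d" "d dvd n"
      using assms by (auto simp: in_prime_factors_iff divgraph_V_def)
    then obtain i where "i \<in> I" "q = p i"
      using prime_dvd_n dvd_trans by blast
    with \<open>q dvd d\<close> show "q \<in> p ` supp d"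
      by (auto simp: supp_def)
  next
    assume "q \<in> p ` supp d"
    then show "q \<in> prime_factors d"
      using assms primes by (auto simp: in_prime_factors_iff supp_def divgraph_V_def)
  qed
  then have "prime_factors d = p ` supp d"
    by blast
  moreover have "inj_on p (supp d)"
    using inj_p supp_subset by (rule inj_on_subset)
  ultimately show ?thesis
    using prime_factorization_nat[OF V_pos[OF assms]] by (simp add: prod.reindex)
qed

lemma card_divisors_with_supp:
  assumes J: "J \<subseteq> I" "J \<noteq> {}"
  shows "card {d \<in> V. supp d = J} = (\<Prod>i\<in>J. r i)"
proof -
  let ?D = "{d \<in> V. supp d = J}" and ?E = "\<Pi>\<^sub>E i\<in>J. {1..r i}"
  define expo where "expo d = (\<lambda>i\<in>J. multiplicity (p i) d)" for d
  define prod_of where "prod_of e = (\<Prod>i\<in>J. p i ^ e i)" for e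
  have fin: "finite J"
    using J(1) finite_subset by blast
  have prod_pos: "0 < prod_of e" for e
    using J(1) primes by (auto simp: prod_of_def prime_gt_0_nat intro!: prod_pos)
  have mult_prod: "multiplicity (p i) (prod_of e) = e i" if "i \<in> J" for i e
    using multiplicity_prime_power_prod[OF J(1)] that J(1) by (auto simp: prod_of_def)
  have "bij_betw expo ?D ?E"
  proof (rule bij_betw_byWitness[where f' = prod_of])
    show "\<forall>d\<in>?D. prod_of (expo d) = d"
    proof
      fix d assume d: "d \<in> ?D"
      then have "prod_of (expo d) = (\<Prod>i\<in>supp d. p i ^ multiplicity (p i) d)"
        by (simp add: prod_of_def expo_def)
      also have "\<dots> = d"
        using divisor_factorization[of d, symmetric] d by simp
      finally show "prod_of (expo d) = d" .
    qed
    show "\<forall>e\<in>?E. expo (prod_of e) = e"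
    proof
      fix e assume "e \<in> ?E"
      have "expo (prod_of e) = restrict e J"
        unfolding expo_def using mult_prod by (rule restrict_ext)
      then show "expo (prod_of e) = e"
        using \<open>e \<in> ?E\<close> by simp
    qed
    show "expo ` ?D \<subseteq> ?E"
    proof
      fix x assume "x \<in> expo ` ?D"
      then obtain d where d: "d \<in> V" "supp d = J" "x = expo d"
        by blast
      have "multiplicity (p i) d \<in> {1..r i}" if "i \<in> J" for i
      proof -
        have "p i dvd d" "i \<in> I"
          using d that by (auto simp: supp_def)
        then have "0 < multiplicity (p i) d"
          using primes V_pos[OF d(1)] by (simp add: prime_multiplicity_gt_zero_iff)
        moreover have "multiplicity (p i) d \<le> multiplicity (p i) n"
          using d(1) n_pos by (intro dvd_imp_multiplicity_le) (auto simp: divgraph_V_def)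
        ultimately show ?thesis
          using multiplicity_n[OF \<open>i \<in> I\<close>] by simp
      qed
      then show "x \<in> ?E"
        using d(3) by (simp add: expo_def)
    qed
    show "prod_of ` ?E \<subseteq> ?D"
    proof
      fix x assume "x \<in> prod_of ` ?E"
      then obtain e where e: "e \<in> ?E" "x = prod_of e"
        by blast
      have "x \<noteq> 0"
        using prod_pos[of e] e(2) by simp
      have "p i dvd x \<longleftrightarrow> i \<in> J" if "i \<in> I" for i
      proof -
        have "p i dvd x \<longleftrightarrow> 0 < multiplicity (p i) x"
          using primes that \<open>x \<noteq> 0\<close> by (simp add: prime_multiplicity_gt_zero_iff)
        also have "multiplicity (p i) x = (if i \<in> J then e i else 0)"
          unfolding e(2) prod_of_def by (rule multiplicity_prime_power_prod[OF J(1) that])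
        finally show ?thesis
          using e(1) by (auto simp: PiE_iff)
      qed
      then have supp: "supp x = J"
        using J(1) by (auto simp: supp_def)
      have "prod_of e dvd (\<Prod>i\<in>J. p i ^ r i)"
        using e(1) by (auto simp: prod_of_def PiE_iff intro!: prod_dvd_prod le_imp_power_dvd)
      also have "\<dots> dvd n"
        unfolding n_eq using J(1) by (intro prod_dvd_prod_subset) auto
      finally have "x dvd n"
        using e(2) by simp
      moreover obtain i where "i \<in> J"
        using J(2) by blast
      then have "p i dvd x" "i \<in> I"
        using supp J(1) by (auto simp: supp_def)
      then have "p i \<le> x" "1 < p i"
        using \<open>x \<noteq> 0\<close> primes prime_gt_1_nat by (auto intro: dvd_imp_le)
      then have "1 < x"
        by simp
      ultimately show "x \<in> ?D"
        using supp by (simp add: divgraph_V_def)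
    qed
  qed
  then have "card ?D = card ?E"
    by (rule bij_betw_same_card)
  also have "\<dots> = (\<Prod>i\<in>J. r i)"
    using fin by (simp add: card_PiE)
  finally show ?thesis .
qed

definition prime_clique :: "nat \<Rightarrow> nat set" where
  "prime_clique i = {d \<in> V. p i dvd d}"

lemma adjacent_p_iff: "i \<in> I \<Longrightarrow> divgraph_E (p i) d \<longleftrightarrow> p i dvd d"
  unfolding divgraph_E_def by (rule prime_gcd_gt_1_iff[OF p_prime])

lemma adjacent_iff_common_p:
  assumes "a \<in> V"
  shows "divgraph_E a b \<longleftrightarrow> (\<exists>i\<in>I. p i dvd a \<and> p i dvd b)"
proof
  assume "divgraph_E a b"
  then obtain q where q: "prime q" "q dvd gcd a b"
    using prime_factor_nat[of "gcd a b"] by (auto simp: divgraph_E_def)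
  moreover have "a dvd n"
    using assms by (simp add: divgraph_V_def)
  ultimately obtain i where "i \<in> I" "q = p i"
    using prime_dvd_n by (meson dvd_trans gcd_dvd1)
  then show "\<exists>i\<in>I. p i dvd a \<and> p i dvd b"
    using q(2) by auto
next
  assume "\<exists>i\<in>I. p i dvd a \<and> p i dvd b"
  then obtain i where "i \<in> I" "p i dvd gcd a b"
    by auto
  moreover have "0 < gcd a b"
    using V_pos[OF assms] by simp
  ultimately have "p i \<le> gcd a b"
    by (simp add: dvd_imp_le)
  then show "divgraph_E a b"
    using prime_gt_1_nat[OF p_prime[OF \<open>i \<in> I\<close>]] by (simp add: divgraph_E_def)
qed

lemma prime_clique_is_clique: "i \<in> I \<Longrightarrow> is_clique V divgraph_E (prime_clique i)"
  by (auto simp: is_clique_def prime_clique_def adjacent_iff_common_p)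

lemma p_in_prime_clique_iff: "i \<in> I \<Longrightarrow> j \<in> I \<Longrightarrow> p i \<in> prime_clique j \<longleftrightarrow> i = j"
  using p_in_V p_dvd_p_iff by (auto simp: prime_clique_def)

lemma clique_p_unique:
  assumes "is_clique V divgraph_E C" "i \<in> I" "j \<in> I" "p i \<in> C" "p j \<in> C"
  shows "i = j"
proof (rule ccontr)
  assume "i \<noteq> j"
  then have "p i \<noteq> p j"
    using inj_on_eq_iff[OF inj_p assms(2,3)] by simp
  then have "divgraph_E (p i) (p j)"
    using assms(1,4,5) unfolding is_clique_def by blast
  then show False
    using \<open>i \<noteq> j\<close> assms(2,3) by (simp add: adjacent_p_iff p_dvd_p_iff)
qed

lemma clique_subset_prime_clique:
  assumes "is_clique V divgraph_E C" "i \<in> I" "p i \<in> C"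
  shows "C \<subseteq> prime_clique i"
proof
  fix d assume "d \<in> C"
  then have "d \<in> V" "d = p i \<or> divgraph_E (p i) d"
    using assms(1,3) by (auto simp: is_clique_def)
  then show "d \<in> prime_clique i"
    using assms(2) by (auto simp: prime_clique_def adjacent_p_iff)
qed

lemma prime_cliques_covering: "total_clique_covering V divgraph_E (prime_clique ` I)"
proof -
  have "\<exists>i\<in>I. d \<in> prime_clique i" if "d \<in> V" for d
    using supp_nonempty[OF that] that by (auto simp: supp_def prime_clique_def)
  moreover have "\<exists>i\<in>I. a \<in> prime_clique i \<and> b \<in> prime_clique i"
    if "a \<in> V" "b \<in> V" "divgraph_E a b" for a b
    using that by (auto simp: adjacent_iff_common_p prime_clique_def)
  ultimately show ?thesis
    using prime_clique_is_clique by (auto simp: total_clique_covering_def)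
qed

lemma inj_on_prime_clique: "inj_on prime_clique I"
  by (rule inj_onI) (metis p_in_prime_clique_iff)

lemma bij_betw_prime_clique: "bij_betw prime_clique I (prime_clique ` I)"
  using inj_on_prime_clique by (rule inj_on_imp_bij_betw)

lemma card_prime_cliques: "card (prime_clique ` I) = k"
  using card_image[OF inj_on_prime_clique] by simp

lemma covering_selects_p_cliques:
  assumes "total_clique_covering V divgraph_E S"
  obtains \<phi> where "\<And>i. i \<in> I \<Longrightarrow> \<phi> i \<in> S \<and> p i \<in> \<phi> i" "inj_on \<phi> I"
proof -
  have "\<forall>i\<in>I. \<exists>C\<in>S. p i \<in> C"
    using assms p_in_V by (auto simp: total_clique_covering_def)
  then obtain \<phi> where \<phi>: "\<And>i. i \<in> I \<Longrightarrow> \<phi> i \<in> S \<and> p i \<in> \<phi> i"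
    by metis
  moreover have "inj_on \<phi> I"
  proof (rule inj_onI)
    fix i j assume "i \<in> I" "j \<in> I" "\<phi> i = \<phi> j"
    then show "i = j"
      using \<phi> assms clique_p_unique[of "\<phi> i" i j] by (auto simp: total_clique_covering_def)
  qed
  ultimately show ?thesis
    using that by blast
qed

lemma covering_card_ge:
  assumes "finite S" "total_clique_covering V divgraph_E S"
  shows "k \<le> card S"
proof -
  obtain \<phi> where "\<And>i. i \<in> I \<Longrightarrow> \<phi> i \<in> S \<and> p i \<in> \<phi> i" "inj_on \<phi> I"
    using covering_selects_p_cliques[OF assms(2)] by blast
  then have "card (\<phi> ` I) \<le> card S"
    using assms(1) by (intro card_mono) auto
  then show ?thesis
    using card_image[OF \<open>inj_on \<phi> I\<close>] by simp
qed

lemma minimum_covering_unique: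
  assumes S: "finite S" "total_clique_covering V divgraph_E S" "card S = k"
  shows "S = prime_clique ` I"
proof -
  obtain \<phi> where \<phi>: "\<And>i. i \<in> I \<Longrightarrow> \<phi> i \<in> S \<and> p i \<in> \<phi> i" and "inj_on \<phi> I"
    using covering_selects_p_cliques[OF S(2)] by blast
  have S_eq: "S = \<phi> ` I"
    using \<phi> card_image[OF \<open>inj_on \<phi> I\<close>] S by (intro card_subset_eq[symmetric]) auto
  have clique: "is_clique V divgraph_E (\<phi> i)" if "i \<in> I" for i
    using S(2) \<phi>[OF that] by (auto simp: total_clique_covering_def)
  \<comment> \<open>every edge from p i must be covered by the only clique of S containing p i\<close>
  have "\<phi> i = prime_clique i" if i: "i \<in> I" for i
  proof
    show "\<phi> i \<subseteq> prime_clique i"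
      using clique_subset_prime_clique[OF clique[OF i] i] \<phi>[OF i] by blast
    show "prime_clique i \<subseteq> \<phi> i"
    proof
      fix d assume d: "d \<in> prime_clique i"
      show "d \<in> \<phi> i"
      proof (cases "d = p i")
        case False
        have "divgraph_E (p i) d" "d \<in> V"
          using d i by (auto simp: prime_clique_def adjacent_p_iff)
        moreover have "\<forall>a\<in>V. \<forall>b\<in>V. a \<noteq> b \<and> divgraph_E a b \<longrightarrow> (\<exists>C\<in>S. a \<in> C \<and> b \<in> C)"
          using S(2) by (simp add: total_clique_covering_def)
        moreover have "p i \<noteq> d"
          using False by simp
        ultimately obtain C where "C \<in> S" "p i \<in> C" "d \<in> C"
          using p_in_V[OF i] by blast
        moreover obtain j where "j \<in> I" "C = \<phi> j"
          using \<open>C \<in> S\<close> S_eq by blast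
        ultimately show ?thesis
          using clique_p_unique[OF clique i] \<phi> by blast
      qed (use \<phi>[OF i] in simp)
    qed
  qed
  then show ?thesis
    using S_eq by simp
qed

lemma no_isolated_vertices:
  assumes "\<not> prime n"
  shows "isolated_vertices V divgraph_E = {}"
proof -
  have "\<exists>u\<in>V. u \<noteq> d \<and> divgraph_E d u" if d: "d \<in> V" for d
  proof -
    obtain i where "i \<in> supp d"
      using supp_nonempty[OF d] by blast
    then have i: "i \<in> I" "p i dvd d"
      unfolding supp_def by blast+
    show ?thesis
    proof (cases "d = p i")
      case False
      have "divgraph_E d (p i)"
        unfolding adjacent_iff_common_p[OF d] using i by (intro bexI[of _ i]) simp_all
      then show ?thesis
        using p_in_V[OF i(1)] False by (intro bexI[of _ "p i"]) auto
    next
      case True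
      \<comment> \<open>n is a proper multiple of p i because n is not prime\<close>
      have "p i \<le> n" "1 < p i"
        using dvd_imp_le[OF p_dvd_n[OF i(1)] n_pos] prime_gt_1_nat[OF p_prime[OF i(1)]] by simp_all
      then have "n \<in> V"
        by (simp add: divgraph_V_def)
      moreover have "n \<noteq> d"
        using True assms p_prime[OF i(1)] by auto
      moreover have "divgraph_E d n"
        unfolding adjacent_iff_common_p[OF d] using i p_dvd_n[OF i(1)] by (intro bexI[of _ i]) simp_all
      ultimately show ?thesis
        by (intro bexI[of _ n]) auto
    qed
  qed
  then show ?thesis
    by (auto simp: isolated_vertices_def)
qed

definition supports :: "nat set multiset" where
  "supports = image_mset supp (mset_set V)"

(* The label sequence of the covering by the prime cliques when prime_clique i receives the
   prime qprime (h i). *)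
definition label_code :: "(nat \<Rightarrow> nat) \<Rightarrow> nat list" where
  "label_code h = sorted_list_of_multiset (image_mset (qprod \<circ> image h) supports)"

lemma set_supports: "A \<in># supports \<Longrightarrow> A \<subseteq> I \<and> A \<noteq> {}"
  using finite_V supp_subset supp_nonempty by (auto simp: supports_def)

lemma count_supports: "J \<subseteq> I \<Longrightarrow> J \<noteq> {} \<Longrightarrow> count supports J = (\<Prod>i\<in>J. r i)"
  by (simp add: supports_def count_image_mset_mset_set finite_V card_divisors_with_supp)

lemma supports_eq: "supports = (\<Sum>J\<in>Pow I - {{}}. replicate_mset (\<Prod>i\<in>J. r i) J)"
proof (rule multiset_eqI)
  fix J
  have "count (\<Sum>J\<in>Pow I - {{}}. replicate_mset (\<Prod>i\<in>J. r i) J) J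
      = (if J \<in> Pow I - {{}} then \<Prod>i\<in>J. r i else 0)"
    by (simp add: count_sum)
  moreover have "count supports J = 0" if "J \<notin> Pow I - {{}}"
    using that set_supports by (auto simp: count_eq_zero_iff)
  ultimately show "count supports J = count (\<Sum>J\<in>Pow I - {{}}. replicate_mset (\<Prod>i\<in>J. r i) J) J"
    using count_supports by auto
qed

lemma label_code_cong: "(\<And>i. i \<in> I \<Longrightarrow> h i = h' i) \<Longrightarrow> label_code h = label_code h'"
proof -
  assume hh': "\<And>i. i \<in> I \<Longrightarrow> h i = h' i"
  have "h ` A = h' ` A" if "A \<in># supports" for A
    using set_supports[OF that] hh' by (intro image_cong) auto
  then show ?thesis
    unfolding label_code_def by (metis (no_types, lifting) comp_apply image_mset_cong)
qed

lemma finite_label_codes: "finite {label_code h | h. bij_betw h I I}"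
proof (rule finite_subset)
  show "{label_code h | h. bij_betw h I I} \<subseteq> label_code ` (\<Pi>\<^sub>E i\<in>I. I)"
  proof
    fix x assume "x \<in> {label_code h | h. bij_betw h I I}"
    then obtain h where h: "bij_betw h I I" "x = label_code h"
      by blast
    then have "restrict h I \<in> (\<Pi>\<^sub>E i\<in>I. I)"
      by (auto simp: bij_betw_def)
    moreover have "x = label_code (restrict h I)"
      unfolding h(2) by (rule label_code_cong) simp
    ultimately show "x \<in> label_code ` (\<Pi>\<^sub>E i\<in>I. I)"
      by blast
  qed
qed (simp add: finite_PiE)

lemma label_seq_prime_cliques:
  assumes "\<not> prime n" "inj_on f (prime_clique ` I)"
  shows "label_seq V divgraph_E (prime_clique ` I) f = label_code (f \<circ> prime_clique)"
proof -
  have "vertex_label V divgraph_E (prime_clique ` I) f d = qprod ((f \<circ> prime_clique) ` supp d)"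
    if "d \<in> V" for d
  proof -
    have "{C \<in> nonisolated_cliques V divgraph_E (prime_clique ` I). d \<in> C} = prime_clique ` supp d"
      using no_isolated_vertices[OF assms(1)] that
      by (auto simp: nonisolated_cliques_def prime_clique_def supp_def)
    then have "vertex_label V divgraph_E (prime_clique ` I) f d = (\<Prod>C\<in>prime_clique ` supp d. qprime (f C))"
      using no_isolated_vertices[OF assms(1)] by (simp add: vertex_label_def)
    also have "\<dots> = (\<Prod>i\<in>supp d. qprime (f (prime_clique i)))"
      using inj_on_subset[OF inj_on_prime_clique supp_subset] by (rule prod.reindex_cong) simp_all
    also have "\<dots> = qprod ((f \<circ> prime_clique) ` supp d)"
    proof -
      have "inj_on (f \<circ> prime_clique) (supp d)"
        using inj_on_subset[OF inj_on_prime_clique supp_subset]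
          inj_on_subset[OF assms(2) image_mono[OF supp_subset]]
        by (rule comp_inj_on)
      then have "qprod ((f \<circ> prime_clique) ` supp d) = (\<Prod>i\<in>supp d. qprime (f (prime_clique i)))"
        unfolding qprod_def by (rule prod.reindex_cong) simp_all
      then show ?thesis
        by (rule sym)
    qed
    finally show ?thesis .
  qed
  then show ?thesis
    unfolding label_seq_def label_code_def supports_def image_mset.compositionality
    using finite_V by (intro arg_cong[where f = sorted_list_of_multiset] image_mset_cong) simp
qed

lemma label_seqs_eq_label_codes:
  assumes "\<not> prime n"
  shows "{label_seq V divgraph_E (prime_clique ` I) f | f. bij_betw f (prime_clique ` I) I}
    = {label_code h | h. bij_betw h I I}"
proof (intro equalityI subsetI)
  fix x
  assume "x \<in> {label_seq V divgraph_E (prime_clique ` I) f | f. bij_betw f (prime_clique ` I) I}"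
  then obtain f where f: "bij_betw f (prime_clique ` I) I" "x = label_seq V divgraph_E (prime_clique ` I) f"
    by blast
  then have "x = label_code (f \<circ> prime_clique)"
    using label_seq_prime_cliques[OF assms] by (simp add: bij_betw_def)
  moreover have "bij_betw (f \<circ> prime_clique) I I"
    using bij_betw_prime_clique f(1) by (rule bij_betw_trans)
  ultimately show "x \<in> {label_code h | h. bij_betw h I I}"
    by blast
next
  fix x
  assume "x \<in> {label_code h | h. bij_betw h I I}"
  then obtain h where h: "bij_betw h I I" "x = label_code h"
    by blast
  define f where "f = h \<circ> the_inv_into I prime_clique"
  have f: "bij_betw f (prime_clique ` I) I"
    unfolding f_def using bij_betw_the_inv_into[OF bij_betw_prime_clique] h(1) by (rule bij_betw_trans)
  have "(f \<circ> prime_clique) i = h i" if "i \<in> I" for i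
    using the_inv_into_f_f[OF inj_on_prime_clique that] by (simp add: f_def)
  then have "label_code (f \<circ> prime_clique) = label_code h"
    by (rule label_code_cong)
  then have "x = label_seq V divgraph_E (prime_clique ` I) f"
    using h(2) f label_seq_prime_cliques[OF assms] by (simp add: bij_betw_def)
  with f show "x \<in> {label_seq V divgraph_E (prime_clique ` I) f | f. bij_betw f (prime_clique ` I) I}"
    by blast
qed

lemma sigma_code_eq_Min_label_code:
  assumes "\<not> prime n"
  shows "sigma_code V divgraph_E = Min {label_code h | h. bij_betw h I I}"
proof -
  note unique = unique_minimum_covering[OF _ prime_cliques_covering, unfolded card_prime_cliques]
  have "theta_t V divgraph_E = k"
    using unique(1) covering_card_ge minimum_covering_unique by simp
  moreover have "nonisolated_cliques V divgraph_E (prime_clique ` I) = prime_clique ` I"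
    using no_isolated_vertices[OF assms] by (simp add: nonisolated_cliques_def)
  moreover have "sigma_code V divgraph_E = sigma_S V divgraph_E (prime_clique ` I)"
    using unique(2) covering_card_ge minimum_covering_unique by simp
  ultimately show ?thesis
    using no_isolated_vertices[OF assms] label_seqs_eq_label_codes[OF assms]
    by (simp add: sigma_S_def)
qed

lemma minimal_label_code_preserves_r:
  assumes r: "antimono_on I r" and h: "bij_betw h I I"
    and minimal: "\<And>h'. bij_betw h' I I \<Longrightarrow> label_code h \<le> label_code h'"
    and a: "a \<in> I"
  shows "r (h a) = r a"
proof (rule antimono_permutation_eq[OF _ h r _ a])
  fix i j assume ij: "i \<in> I" "j \<in> I" "h i < h j"
  show "r j \<le> r i"
  proof (rule ccontr)
    assume "\<not> r j \<le> r i"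
    let ?M = "image_mset (image h) supports"
    let ?\<sigma> = "transpose (h i) (h j)"
    have hI: "h ` A \<subseteq> I" if "A \<subseteq> I" for A
      using h that by (auto simp: bij_betw_def)
    have M: "finite A \<and> 0 \<notin> A" if "A \<in># ?M" for A
    proof -
      have "A \<in> image h ` set_mset supports"
        using that by simp
      then obtain B where "B \<in># supports" "A = h ` B"
        by (rule imageE)
      then have "A \<subseteq> I"
        using set_supports hI by blast
      then show ?thesis
        using finite_subset[OF \<open>A \<subseteq> I\<close>] by auto
    qed
    have count_M: "count ?M {h c} = r c" if "c \<in> I" for c
    proof -
      have "\<Union> (insert {c} (set_mset supports)) \<subseteq> I"
        using that set_supports by blast
      then have "inj_on (image h) (insert {c} (set_mset supports))"
        by (rule inj_on_image[OF inj_on_subset[OF bij_betw_imp_inj_on[OF h]]])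
      from count_image_mset_inj_on[OF this] show ?thesis
        using that by (simp add: count_supports)
    qed
    \<comment> \<open>swapping the primes of the cliques of p i and p j makes the code smaller\<close>
    have "sorted_list_of_multiset (image_mset (qprod \<circ> image ?\<sigma>) ?M)
        < sorted_list_of_multiset (image_mset qprod ?M)"
    proof (rule sorted_qprod_transpose_less)
      show "finite A \<and> 0 \<notin> A" if "A \<in># ?M" for A
        using that by (rule M)
      show "0 < h i" "h i < h j"
        using hI[of "{i}"] ij by auto
      show "count ?M {h i} < count ?M {h j}"
        using count_M ij \<open>\<not> r j \<le> r i\<close> by simp
    qed
    then have "label_code (?\<sigma> \<circ> h) < label_code h"
      by (simp add: label_code_def image_mset.compositionality comp_def image_image)
    moreover have "bij_betw (?\<sigma> \<circ> h) I I"
    proof (rule bij_betw_trans[OF h])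
      have "h i \<in> I" "h j \<in> I"
        using hI[of "{i}"] hI[of "{j}"] ij by auto
      then show "bij_betw ?\<sigma> I I"
        by (simp only: bij_betw_transpose_iff)
    qed
    ultimately show False
      using minimal by (meson leD)
  qed
qed simp

lemma relabel_supports_eq:
  assumes h: "bij_betw h I I" and hr: "\<And>a. a \<in> I \<Longrightarrow> r (h a) = r a"
  shows "image_mset (image h) supports = supports"
proof -
  let ?P = "Pow I - {{}}"
  have P: "bij_betw (image h) ?P ?P"
    using bij_betw_Pow[OF h] by (rule bij_betw_DiffI) (auto simp: bij_betw_def)
  have "image_mset (image h) supports = (\<Sum>J\<in>?P. replicate_mset (\<Prod>i\<in>J. r i) (h ` J))"
    unfolding supports_eq
    by (subst sum_comp_morphism[symmetric]) (simp_all add: comp_def)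
  also have "\<dots> = (\<Sum>J\<in>?P. replicate_mset (\<Prod>i\<in>h ` J. r i) (h ` J))"
  proof (rule sum.cong)
    fix J assume "J \<in> ?P"
    then have "J \<subseteq> I"
      by simp
    then have "inj_on h J"
      by (rule inj_on_subset[OF bij_betw_imp_inj_on[OF h]])
    have "(\<Prod>i\<in>h ` J. r i) = (\<Prod>i\<in>J. r i)"
      using \<open>inj_on h J\<close> refl by (rule prod.reindex_cong) (use hr \<open>J \<subseteq> I\<close> in blast)
    then show "replicate_mset (\<Prod>i\<in>J. r i) (h ` J) = replicate_mset (\<Prod>i\<in>h ` J. r i) (h ` J)"
      by simp
  qed simp
  also have "\<dots> = (\<Sum>J\<in>?P. replicate_mset (\<Prod>i\<in>J. r i) J)"
    using P by (rule sum.reindex_bij_betw)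
  finally show ?thesis
    by (simp add: supports_eq)
qed

lemma F_G_not_prime:
  assumes r: "antimono_on I r" and "\<not> prime n"
  shows "F_G n = (\<Sum>J\<in>Pow I - {{}}. replicate_mset (\<Prod>i\<in>J. r i) J)"
proof -
  let ?L = "{label_code h | h. bij_betw h I I}"
  have "?L \<noteq> {}"
    using bij_betw_id by blast
  then obtain h where h: "bij_betw h I I" "Min ?L = label_code h"
    using Min_in[OF finite_label_codes] by blast
  have minimal: "label_code h \<le> label_code h'" if "bij_betw h' I I" for h'
    using Min_le[OF finite_label_codes] h(2) that by force
  have "sigma_code V divgraph_E = label_code h"
    using sigma_code_eq_Min_label_code[OF assms(2)] h(2) by simp
  then have "F_G n = image_mset monomial_of (image_mset (qprod \<circ> image h) supports)"
    by (simp add: F_G_def normal_poly_rep_def label_code_def)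
  also have "\<dots> = image_mset (image h) supports"
  proof -
    have "monomial_of (qprod (h ` A)) = h ` A" if "A \<in># supports" for A
    proof -
      have "h ` A \<subseteq> I"
        using set_supports[OF that] h by (auto simp: bij_betw_def)
      then show ?thesis
        using finite_subset[OF \<open>h ` A \<subseteq> I\<close>] by (intro monomial_of_qprod) auto
    qed
    then show ?thesis
      by (simp add: image_mset.compositionality cong: image_mset_cong)
  qed
  also have "\<dots> = supports"
    using h(1) minimal_label_code_preserves_r[OF r h(1) minimal] by (rule relabel_supports_eq)
  finally show ?thesis
    by (simp add: supports_eq)
qed

end

lemma F_G_prime:
  assumes "prime n"
  shows "F_G n = {#{}#}"
proof -
  have "divgraph_V n = {n}"
    using assms prime_gt_1_nat by (auto simp: divgraph_V_def prime_nat_iff)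
  moreover have "monomial_of 1 = {}"
    using monomial_of_qprod[of "{}"] by (simp add: qprod_def)
  ultimately show ?thesis
    by (simp add: F_G_def normal_poly_rep_def sigma_code_singleton)
qed

theorem theorem5:
  fixes n k :: nat and p r :: "nat \<Rightarrow> nat"
  assumes "k \<ge> 1"
    and "\<forall>i\<in>{1..k}. prime (p i)"
    and "inj_on p {1..k}"
    and "\<forall>i\<in>{1..k}. r i \<ge> 1"
    and "\<forall>i j. 1 \<le> i \<and> i \<le> j \<and> j \<le> k \<longrightarrow> r j \<le> r i"
    and "n = (\<Prod>i=1..k. p i ^ r i)"
  shows "(\<not> prime n \<longrightarrow>
            F_G n = (\<Sum>J \<in> Pow {1..k} - {{}}. replicate_mset (\<Prod>i\<in>J. r i) J))
       \<and> (prime n \<longrightarrow> F_G n = {#{}#})"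
proof -
  interpret prime_power_product n k p r
    using assms(2-4,6) by unfold_locales
  have "antimono_on {1..k} r"
    using assms(5) by (intro monotone_onI) auto
  then show ?thesis
    using F_G_not_prime F_G_prime by blast
qed

end
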